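(* Let $k$ be an algebraically closed field, let $A$ be a local Noetherian $k$-algebra with residue field $k$, and let $M$ be a finitely generated $A$-module. Then $M$ is free if and only if for every integer $n > 0$ and every ideal $I_n \subset A$ of colength $n$, $$\frac{\dim_k (M \otimes_A A/I_n)}{n} = \dim_k (M \otimes_A k).$$
   Context: An ideal $I \subset A$ is said to be of colength $n$ if $A/I$ is an Artinian $k$-algebra with $\dim_k A/I = n$. *)

theory Defs
  imports Complex_Main "HOL-Computational_Algebra.Polynomial"
begin

definition alg_closed :: "'k::field itself \<Rightarrow> bool" where
  "alg_closed _ = (\<forall>p::'k poly. degree p > 0 \<longrightarrow> (\<exists>x. poly p x = 0))"

definition is_ideal :: "'a::comm_ring_1 set \<Rightarrow> bool" where
  "is_ideal I = module.subspace ((*) :: 'a \<Rightarrow> 'a \<Rightarrow> 'a) I"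

definition maximal_ideal :: "'a::comm_ring_1 set \<Rightarrow> bool" where
  "maximal_ideal m = (is_ideal m \<and> m \<noteq> UNIV \<and>
     (\<forall>J. is_ideal J \<and> m \<subseteq> J \<longrightarrow> J = m \<or> J = UNIV))"

definition local_ring :: "'a::comm_ring_1 itself \<Rightarrow> bool" where
  "local_ring _ = (\<exists>!m::'a set. maximal_ideal m)"

definition noetherian_ring :: "'a::comm_ring_1 itself \<Rightarrow> bool" where
  "noetherian_ring _ = (\<forall>I::'a set. is_ideal I \<longrightarrow>
     (\<exists>F. finite F \<and> I = module.span ((*) :: 'a \<Rightarrow> 'a \<Rightarrow> 'a) F))"

definition ring_hom :: "('k::field \<Rightarrow> 'a::comm_ring_1) \<Rightarrow> bool" where
  "ring_hom \<phi> = ((\<forall>x y. \<phi> (x + y) = \<phi> x + \<phi> y) \<and> (\<forall>x y. \<phi> (x * y) = \<phi> x * \<phi> y) \<and> \<phi> 1 = 1)"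

(* A/I is Artinian: DCC on ideals of A/I, i.e. on ideals of A containing I *)
definition artinian_quotient :: "'a::comm_ring_1 set \<Rightarrow> bool" where
  "artinian_quotient I = (\<forall>J :: nat \<Rightarrow> 'a set.
     (\<forall>i. is_ideal (J i) \<and> I \<subseteq> J i \<and> J (Suc i) \<subseteq> J i) \<longrightarrow> (\<exists>N. \<forall>i\<ge>N. J i = J N))"

(* Dimension over the field 'k of the quotient V/N, where s is the scalar
   multiplication of 'k on V: cardinality of a set B of representatives of a basis of V/N. *)
definition indep_mod :: "('k::field \<Rightarrow> 'v::ab_group_add \<Rightarrow> 'v) \<Rightarrow> 'v set \<Rightarrow> 'v set \<Rightarrow> bool" where
  "indep_mod s N B = (\<forall>F u. finite F \<and> F \<subseteq> B \<and> (\<Sum>b\<in>F. s (u b) b) \<in> module.span s N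
      \<longrightarrow> (\<forall>b\<in>F. u b = 0))"

definition quot_dim :: "('k::field \<Rightarrow> 'v::ab_group_add \<Rightarrow> 'v) \<Rightarrow> 'v set \<Rightarrow> nat" where
  "quot_dim s N = card (SOME B. indep_mod s N B \<and> module.span s (B \<union> N) = UNIV)"

definition ideal_times :: "('a::comm_ring_1 \<Rightarrow> 'm::ab_group_add \<Rightarrow> 'm) \<Rightarrow> 'a set \<Rightarrow> 'm set" where
  "ideal_times scale I = module.span scale {scale a x | a x. a \<in> I}"

(* dim_k (M \<otimes>_A A/I), computed via the canonical isomorphism M \<otimes>_A A/I \<cong> M/IM *)
definition tensor_quot_dim :: "('k::field \<Rightarrow> 'a::comm_ring_1) \<Rightarrow> ('a \<Rightarrow> 'm::ab_group_add \<Rightarrow> 'm) \<Rightarrow> 'a set \<Rightarrow> nat" where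
  "tensor_quot_dim \<phi> scale I = quot_dim (\<lambda>c x. scale (\<phi> c) x) (ideal_times scale I)"

definition colength :: "('k::field \<Rightarrow> 'a::comm_ring_1) \<Rightarrow> 'a set \<Rightarrow> nat \<Rightarrow> bool" where
  "colength \<phi> I n = (is_ideal I \<and> artinian_quotient I \<and> quot_dim (\<lambda>c a. \<phi> c * a) I = n)"

definition free_module :: "('a::comm_ring_1 \<Rightarrow> 'm::ab_group_add \<Rightarrow> 'm) \<Rightarrow> bool" where
  "free_module scale = (\<exists>B. \<not> module.dependent scale B \<and> module.span scale B = UNIV)"

definition fin_gen_module :: "('a::comm_ring_1 \<Rightarrow> 'm::ab_group_add \<Rightarrow> 'm) \<Rightarrow> bool" where
  "fin_gen_module scale = (\<exists>S. finite S \<and> module.span scale S = UNIV)"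

end

theory Submission
  imports Defs
begin

text \<open>If \<open>M\<close> is free of rank \<open>r\<close>, then \<open>M/IM \<cong> (A/I)\<^sup>r\<close>, so \<open>dim\<^sub>k M/IM = n r\<close> for every
  ideal \<open>I\<close> of colength \<open>n\<close>, and \<open>r = dim\<^sub>k M/mM\<close>.
  Conversely, lift a \<open>k\<close>-basis of \<open>M/mM\<close> to \<open>B \<subseteq> M\<close>; by Nakayama's lemma \<open>B\<close> generates \<open>M\<close>.
  For an ideal \<open>I\<close> of colength \<open>n\<close>, \<open>M/IM\<close> is spanned by the \<open>n |B|\<close> products of \<open>B\<close> with a
  \<open>k\<close>-basis of \<open>A/I\<close>, so the hypothesis \<open>dim\<^sub>k M/IM = n |B|\<close> makes them independent, and
  the coefficients of any relation among \<open>B\<close> lie in \<open>I\<close>. Finally, the ideals of finite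
  colength have zero intersection: an ideal maximal with respect to avoiding \<open>a \<noteq> 0\<close> is
  \<open>m\<close>-primary, hence of finite colength. So \<open>B\<close> is a basis.\<close>

section \<open>Dimension modulo a subspace\<close>

lemma indep_modD:
  assumes "indep_mod s N B" "finite F" "F \<subseteq> B" "(\<Sum>b\<in>F. s (u b) b) \<in> module.span s N" "b \<in> F"
  shows "u b = 0"
  using assms unfolding indep_mod_def by blast

lemma indep_mod_mono:
  assumes "indep_mod s N B" "module.span s N' \<subseteq> module.span s N"
  shows "indep_mod s N' B"
  using assms unfolding indep_mod_def by blast

lemma bounded_incseq_nat_eventually_const:
  fixes f :: "nat \<Rightarrow> nat"
  assumes "\<And>i. f i \<le> f (Suc i)" "\<And>i. f i \<le> K"
  shows "\<exists>n. \<forall>i\<ge>n. f i = f n"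
proof -
  have fin: "finite (range f)" by (rule finite_subset[of _ "{..K}"]) (use assms(2) in auto)
  then obtain n where n: "f n = Max (range f)" using Max_in by (metis empty_not_UNIV image_iff image_is_empty)
  have "f i = f n" if "i \<ge> n" for i
    using lift_Suc_mono_le[of f, OF assms(1) that] Max_ge[OF fin, of "f i"] n by simp
  thus ?thesis by blast
qed

context
  fixes s :: "'k::field \<Rightarrow> 'v::ab_group_add \<Rightarrow> 'v"
  assumes module: "module s"
begin

interpretation module s by (rule module)

lemma not_in_span_if_indep_mod:
  assumes "indep_mod s N B" "b \<in> B"
  shows "b \<notin> span N"
proof
  assume "b \<in> span N"
  hence "(\<Sum>x\<in>{b}. s ((\<lambda>_. 1) x) x) \<in> span N" by simp
  from indep_modD[OF assms(1) _ _ this, of b] assms(2) show False by simp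
qed

lemma indep_mod_exchange:
  assumes "indep_mod s N B" "b0 \<in> B"
  shows "indep_mod s (insert b0 N) (B - {b0})"
  unfolding indep_mod_def
proof (intro allI impI ballI)
  fix F u b
  assume F: "finite F \<and> F \<subseteq> B - {b0} \<and> (\<Sum>b\<in>F. s (u b) b) \<in> span (insert b0 N)" and "b \<in> F"
  then obtain c where c: "(\<Sum>b\<in>F. s (u b) b) - s c b0 \<in> span N" by (auto simp: span_insert)
  let ?u = "u(b0 := - c)"
  have "b0 \<notin> F" using F by auto
  have "(\<Sum>x\<in>insert b0 F. s (?u x) x) = s (- c) b0 + (\<Sum>x\<in>F. s (u x) x)"
    using F \<open>b0 \<notin> F\<close> by (simp add: sum.insert) (rule sum.cong, auto)
  also have "\<dots> = (\<Sum>b\<in>F. s (u b) b) - s c b0" by (simp add: scale_minus_left)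
  finally have "(\<Sum>x\<in>insert b0 F. s (?u x) x) \<in> span N" using c by simp
  hence "?u b = 0" using indep_modD[OF assms(1)] F assms(2) \<open>b \<in> F\<close> by blast
  thus "u b = 0" using \<open>b \<in> F\<close> \<open>b0 \<notin> F\<close> by (cases "b = b0") auto
qed

text \<open>Steinitz exchange, relative to the subspace spanned by \<open>N\<close>: each step trades a generator
  from \<open>T\<close> for a vector of \<open>B\<close>, which is then moved into the subspace.\<close>

lemma indep_mod_card_le:
  assumes "finite T" "indep_mod s N B" "B \<subseteq> span (T \<union> N)"
  shows "finite B \<and> card B \<le> card T"
  using assms
proof (induction T arbitrary: N B rule: finite_induct)
  case (empty N B)
  have "B = {}" using not_in_span_if_indep_mod[OF empty(1)] empty(2) by auto
  thus ?case by simp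
next
  case (insert t T N B)
  show ?case
  proof (cases "B \<subseteq> span (T \<union> N)")
    case True
    from insert.IH[OF insert.prems(1) True] insert.hyps show ?thesis by auto
  next
    case False
    then obtain b0 where b0: "b0 \<in> B" "b0 \<notin> span (T \<union> N)" by auto
    have "b0 \<in> span (insert t (T \<union> N))" using insert.prems(2) b0 by auto
    then obtain k where k: "b0 - s k t \<in> span (T \<union> N)" by (auto simp: span_insert)
    have "k \<noteq> 0" using k b0 by auto
    let ?N' = "insert b0 N"
    have "t \<in> span (T \<union> ?N')"
    proof -
      have "b0 - s k t \<in> span (T \<union> ?N')" using k span_mono[of "T \<union> N" "T \<union> ?N'"] by auto
      moreover have "b0 \<in> span (T \<union> ?N')" by (rule span_base) auto
      ultimately have "s k t \<in> span (T \<union> ?N')" using span_diff by fastforce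
      hence "s (inverse k) (s k t) \<in> span (T \<union> ?N')" by (rule span_scale)
      thus ?thesis using \<open>k \<noteq> 0\<close> by simp
    qed
    hence "span (insert t T \<union> N) \<subseteq> span (T \<union> ?N')"
      by (intro span_minimal) (auto intro: span_base)
    hence sub: "B - {b0} \<subseteq> span (T \<union> ?N')" using insert.prems(2) by auto
    from insert.IH[OF indep_mod_exchange[OF insert.prems(1) b0(1)] sub]
    have "finite (B - {b0})" "card (B - {b0}) \<le> card T" by auto
    thus ?thesis using b0(1) insert.hyps by (simp add: card_Suc_Diff1)
  qed
qed

lemma ex_indep_mod_spanning: "\<exists>B. indep_mod s N B \<and> span (B \<union> N) = UNIV"
proof -
  interpret vector_space s using module by (simp add: module_iff_vector_space)
  obtain C where C: "C \<subseteq> span N" "independent C" "span N \<subseteq> span C"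
    by (rule maximal_independent_subset_extend[OF empty_subsetI independent_empty])
  obtain D where D: "C \<subseteq> D" "independent D" "UNIV \<subseteq> span D"
    by (rule maximal_independent_subset_extend[OF subset_UNIV C(2)])
  have "indep_mod s N (D - C)"
    unfolding indep_mod_def
  proof (intro allI impI ballI)
    fix F u b assume F: "finite F \<and> F \<subseteq> D - C \<and> (\<Sum>b\<in>F. s (u b) b) \<in> span N" and "b \<in> F"
    hence "(\<Sum>b\<in>F. s (u b) b) \<in> span C" using C(3) by auto
    then obtain t r where t: "finite t" "t \<subseteq> C" "(\<Sum>b\<in>F. s (u b) b) = (\<Sum>a\<in>t. s (r a) a)"
      unfolding span_explicit by auto
    have disj: "F \<inter> t = {}" using F t by auto
    let ?w = "\<lambda>v. if v \<in> F then u v else - r v"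
    have "(\<Sum>v\<in>F. s (?w v) v) = (\<Sum>v\<in>F. s (u v) v)" by (rule sum.cong) auto
    moreover have "(\<Sum>v\<in>t. s (?w v) v) = - (\<Sum>v\<in>t. s (r v) v)"
      using disj by (auto simp: sum_negf[symmetric] scale_minus_left intro!: sum.cong)
    ultimately have "(\<Sum>v\<in>F \<union> t. s (?w v) v) = 0"
      using F t disj by (simp add: sum.union_disjoint)
    hence "?w b = 0"
      using independentD[OF D(2), of "F \<union> t" ?w b] F t D(1) \<open>b \<in> F\<close> by auto
    thus "u b = 0" using \<open>b \<in> F\<close> by simp
  qed
  moreover have "D \<subseteq> span ((D - C) \<union> N)"
    using C(1) span_mono[of N "(D - C) \<union> N"] by (auto intro: span_base)
  hence "span ((D - C) \<union> N) = UNIV" using D(3) span_minimal[OF _ subspace_span] by blast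
  ultimately show ?thesis by blast
qed

lemma obtain_quot_dim_basis:
  obtains B where "indep_mod s N B" "span (B \<union> N) = UNIV" "quot_dim s N = card B"
proof -
  let ?B = "SOME B. indep_mod s N B \<and> span (B \<union> N) = UNIV"
  have "indep_mod s N ?B \<and> span (?B \<union> N) = UNIV"
    using someI_ex[OF ex_indep_mod_spanning] .
  thus ?thesis using that unfolding quot_dim_def by blast
qed

lemma quot_dim_le_card:
  assumes "finite T" "span (T \<union> N) = UNIV"
  shows "quot_dim s N \<le> card T"
  using indep_mod_card_le[OF assms(1)] assms(2) by (metis obtain_quot_dim_basis subset_UNIV)

lemma indep_mod_card_le_quot_dim:
  assumes "finite T" "span (T \<union> N) = UNIV" "indep_mod s N B"
  shows "finite B \<and> card B \<le> quot_dim s N"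
proof -
  obtain B0 where B0: "indep_mod s N B0" "span (B0 \<union> N) = UNIV" "quot_dim s N = card B0"
    by (rule obtain_quot_dim_basis)
  have "finite B0" using indep_mod_card_le[OF assms(1) B0(1)] assms(2) by auto
  thus ?thesis using indep_mod_card_le[OF _ assms(3)] B0 by auto
qed

lemma quot_dim_eq_card:
  assumes "finite B" "span (B \<union> N) = UNIV" "indep_mod s N B"
  shows "quot_dim s N = card B"
  using quot_dim_le_card[OF assms(1,2)] indep_mod_card_le_quot_dim[OF assms] by simp

lemma quot_dim_pos:
  assumes "finite T" "span (T \<union> N) = UNIV" "span N \<noteq> UNIV"
  shows "0 < quot_dim s N"
proof (rule ccontr)
  assume "\<not> 0 < quot_dim s N"
  moreover obtain B where B: "indep_mod s N B" "span (B \<union> N) = UNIV" "quot_dim s N = card B"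
    by (rule obtain_quot_dim_basis)
  moreover have "finite B" using indep_mod_card_le_quot_dim[OF assms(1,2) B(1)] by blast
  ultimately show False using assms(3) by simp
qed

lemma quot_dim_antimono:
  assumes "finite T" "span (T \<union> N) = UNIV" "N \<subseteq> N'"
  shows "quot_dim s N' \<le> quot_dim s N"
proof -
  obtain B where B: "indep_mod s N' B" "quot_dim s N' = card B"
    by (rule obtain_quot_dim_basis)
  have "indep_mod s N B" using indep_mod_mono[OF B(1)] span_mono[OF assms(3)] by blast
  from indep_mod_card_le_quot_dim[OF assms(1,2) this] B(2) show ?thesis by simp
qed

lemma indep_mod_insert:
  assumes "indep_mod s N' B" "N \<subseteq> N'" "subspace N" "subspace N'" "y \<in> N'" "y \<notin> N"
  shows "indep_mod s N (insert y B)"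
  unfolding indep_mod_def
proof (intro allI impI ballI)
  fix F u b assume F: "finite F \<and> F \<subseteq> insert y B \<and> (\<Sum>b\<in>F. s (u b) b) \<in> span N" and "b \<in> F"
  have "(\<Sum>b\<in>F. s (u b) b) \<in> N" using F assms(3) by (metis span_eq_iff)
  hence FN': "(\<Sum>b\<in>F. s (u b) b) \<in> N'" using assms(2) by auto
  define r where "r = (\<Sum>b\<in>F - {y}. s (u b) b)"
  have r_in: "r \<in> N'" if "y \<in> F"
  proof -
    have "r = (\<Sum>b\<in>F. s (u b) b) - s (u y) y"
      using F that by (simp add: r_def sum.remove)
    thus ?thesis using FN' assms(4,5) by (simp add: subspace_diff subspace_scale)
  qed
  have rest: "\<forall>b\<in>F - {y}. u b = 0"
  proof (cases "y \<in> F")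
    case True
    have "r \<in> span N'" using r_in[OF True] span_base by blast
    moreover have "F - {y} \<subseteq> B" using F by auto
    ultimately show ?thesis using indep_modD[OF assms(1), of "F - {y}" u] F unfolding r_def by auto
  next
    case False
    hence "F \<subseteq> B" using F by auto
    thus ?thesis using indep_modD[OF assms(1), of F u] FN' F span_base by blast
  qed
  have "u y = 0" if "y \<in> F"
  proof (rule ccontr)
    assume "u y \<noteq> 0"
    have "(\<Sum>b\<in>F. s (u b) b) = s (u y) y + r"
      using F that by (simp add: r_def sum.remove)
    also have "r = 0" using rest by (simp add: r_def)
    finally have "s (u y) y \<in> span N" using F by simp
    hence "s (inverse (u y)) (s (u y) y) \<in> span N" by (rule span_scale)
    hence "y \<in> span N" using \<open>u y \<noteq> 0\<close> by simp
    thus False using assms(3,6) by (metis span_eq_iff)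
  qed
  thus "u b = 0" using rest \<open>b \<in> F\<close> by (cases "b = y") auto
qed

lemma subspace_eq_if_quot_dim_eq:
  assumes "finite T" "span (T \<union> N) = UNIV" "N \<subseteq> N'" "subspace N" "subspace N'"
    and "quot_dim s N' = quot_dim s N"
  shows "N' = N"
proof (rule ccontr)
  assume "N' \<noteq> N"
  then obtain y where y: "y \<in> N'" "y \<notin> N" using assms(3) by auto
  obtain B where B: "indep_mod s N' B" "quot_dim s N' = card B"
    by (rule obtain_quot_dim_basis)
  have "y \<notin> B" using not_in_span_if_indep_mod[OF B(1)] y(1) span_base by blast
  from indep_mod_card_le_quot_dim[OF assms(1,2) indep_mod_insert[OF B(1) assms(3-5) y]] \<open>y \<notin> B\<close>
  have "Suc (card B) \<le> quot_dim s N" by (auto simp: card_insert_if)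
  thus False using assms(6) B(2) by simp
qed

text \<open>The codimensions of the \<open>J i\<close> form a bounded increasing sequence.\<close>

lemma subspace_chain_stabilises:
  assumes "finite T" "span (T \<union> Q) = UNIV"
    and J: "\<And>i. subspace (J i) \<and> Q \<subseteq> J i \<and> J (Suc i) \<subseteq> J i"
  shows "\<exists>n. \<forall>i\<ge>n. J i = J n"
proof -
  have span_J: "span (T \<union> J i) = UNIV" for i
    using assms(2) span_mono[of "T \<union> Q" "T \<union> J i"] J by blast
  have "\<exists>n. \<forall>i\<ge>n. quot_dim s (J i) = quot_dim s (J n)"
    using quot_dim_antimono[OF assms(1) span_J] quot_dim_le_card[OF assms(1) span_J] J
    by (intro bounded_incseq_nat_eventually_const) blast+
  then obtain n where n: "\<forall>i\<ge>n. quot_dim s (J i) = quot_dim s (J n)" ..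
  have "J i = J n" if "i \<ge> n" for i
    using subspace_eq_if_quot_dim_eq[OF assms(1) span_J lift_Suc_antimono_le[of J, OF _ that]] J n that
    by metis
  thus ?thesis by blast
qed

lemma quot_dim_family_indep:
  fixes f :: "'x \<Rightarrow> 'v"
  assumes "finite X" "span (f ` X \<union> N) = UNIV" "quot_dim s N = card X"
    and "(\<Sum>x\<in>X. s (u x) (f x)) \<in> span N" "x0 \<in> X"
  shows "u x0 = 0"
proof (rule ccontr)
  assume "u x0 \<noteq> 0"
  let ?R = "f ` (X - {x0}) \<union> N"
  have "(\<Sum>x\<in>X - {x0}. s (u x) (f x)) \<in> span ?R"
    by (intro span_sum span_scale span_base) auto
  moreover have "(\<Sum>x\<in>X. s (u x) (f x)) \<in> span ?R" using assms(4) span_mono[of N ?R] by auto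
  moreover have "s (u x0) (f x0) = (\<Sum>x\<in>X. s (u x) (f x)) - (\<Sum>x\<in>X - {x0}. s (u x) (f x))"
    using assms(1,5) by (simp add: sum.remove)
  ultimately have "s (u x0) (f x0) \<in> span ?R" using span_diff by metis
  hence "s (inverse (u x0)) (s (u x0) (f x0)) \<in> span ?R" by (rule span_scale)
  hence "f x0 \<in> span ?R" using \<open>u x0 \<noteq> 0\<close> by simp
  hence "f ` X \<union> N \<subseteq> span ?R" using span_superset[of ?R] by blast
  hence "span ?R = UNIV" using assms(2) span_minimal[OF _ subspace_span] by blast
  hence "quot_dim s N \<le> card (f ` (X - {x0}))" using quot_dim_le_card assms(1) by blast
  also have "\<dots> < card X"
    using card_image_le[of "X - {x0}" f] card_Diff1_less[OF assms(1,5)] assms(1) by simp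
  finally show False using assms(3) by simp
qed

lemma quot_dim_family_eq_card:
  fixes f :: "'x \<Rightarrow> 'v"
  assumes "finite X" "span (f ` X \<union> N) = UNIV"
    and indep: "\<And>u. (\<Sum>x\<in>X. s (u x) (f x)) \<in> span N \<Longrightarrow> \<forall>x\<in>X. u x = 0"
  shows "quot_dim s N = card X"
proof -
  have inj: "inj_on f X"
  proof (rule inj_onI, rule ccontr)
    fix x y assume xy: "x \<in> X" "y \<in> X" "f x = f y" "x \<noteq> y"
    let ?u = "\<lambda>z. if z = x then 1 else if z = y then - 1 else (0::'k)"
    have "(\<Sum>z\<in>X. s (?u z) (f z)) = (\<Sum>z\<in>{x, y}. s (?u z) (f z))"
      using assms(1) xy by (intro sum.mono_neutral_right) auto
    also have "\<dots> = 0" using xy by (simp add: scale_minus_left)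
    finally have "(\<Sum>z\<in>X. s (?u z) (f z)) \<in> span N" using span_zero by simp
    hence "\<forall>z\<in>X. ?u z = 0" by (rule indep)
    thus False using xy(1) by force
  qed
  have "indep_mod s N (f ` X)"
    unfolding indep_mod_def
  proof (intro allI impI ballI)
    fix F u b assume F: "finite F \<and> F \<subseteq> f ` X \<and> (\<Sum>b\<in>F. s (u b) b) \<in> span N" and "b \<in> F"
    let ?X = "{x\<in>X. f x \<in> F}"
    let ?w = "\<lambda>x. if f x \<in> F then u (f x) else 0"
    have "(\<Sum>x\<in>X. s (?w x) (f x)) = (\<Sum>x\<in>X. if f x \<in> F then s (u (f x)) (f x) else 0)"
      by (intro sum.cong) auto
    also have "\<dots> = (\<Sum>x\<in>?X. s (u (f x)) (f x))"
      using assms(1) by (simp add: sum.inter_filter)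
    also have "\<dots> = (\<Sum>b\<in>f ` ?X. s (u b) b)"
      using inj_on_subset[OF inj] by (simp add: sum.reindex)
    also have "f ` ?X = F" using F by auto
    finally have "(\<Sum>x\<in>X. s (?w x) (f x)) \<in> span N" using F by simp
    hence "\<forall>x\<in>X. ?w x = 0" by (rule indep)
    thus "u b = 0" using F \<open>b \<in> F\<close> by force
  qed
  thus ?thesis using quot_dim_eq_card[OF _ assms(2)] assms(1) card_image[OF inj] by simp
qed

end

section \<open>Ideals and local rings\<close>

interpretation R: module "(*) :: 'a::comm_ring_1 \<Rightarrow> 'a \<Rightarrow> 'a"
  by unfold_locales (simp_all add: algebra_simps)

declare R.scale_scale[simp del] \<comment> \<open>it is \<open>mult.assoc\<close> reversed, so the simplifier would loop\<close>

lemma ideal_0: "is_ideal I \<Longrightarrow> 0 \<in> I"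
  unfolding is_ideal_def by (rule R.subspace_0)

lemma ideal_add: "is_ideal I \<Longrightarrow> x \<in> I \<Longrightarrow> y \<in> I \<Longrightarrow> x + y \<in> I"
  unfolding is_ideal_def by (rule R.subspace_add)

lemma ideal_diff: "is_ideal I \<Longrightarrow> x \<in> I \<Longrightarrow> y \<in> I \<Longrightarrow> x - y \<in> I"
  unfolding is_ideal_def by (rule R.subspace_diff)

lemma ideal_mult_left: "is_ideal I \<Longrightarrow> x \<in> I \<Longrightarrow> c * x \<in> I"
  unfolding is_ideal_def by (rule R.subspace_scale)

lemma ideal_mult_right: "is_ideal I \<Longrightarrow> x \<in> I \<Longrightarrow> x * c \<in> I"
  using ideal_mult_left[of I x c] by (simp add: mult.commute)

lemma is_ideal_span: "is_ideal (R.span S)"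
  unfolding is_ideal_def by (rule R.subspace_span)

lemma span_ideal: "is_ideal I \<Longrightarrow> R.span I = I"
  unfolding is_ideal_def by simp

lemma ideal_eq_UNIV_iff: "is_ideal I \<Longrightarrow> I = UNIV \<longleftrightarrow> (1::'a::comm_ring_1) \<in> I"
  using ideal_mult_left[of I 1] by auto

lemma is_ideal_colon: "is_ideal Q \<Longrightarrow> is_ideal {y. z * y \<in> Q}"
  unfolding is_ideal_def R.subspace_def by (simp add: distrib_left mult.left_commute)

lemma is_ideal_Union_chain:
  assumes "C \<noteq> {}" "\<And>X. X \<in> C \<Longrightarrow> is_ideal X" "subset.chain UNIV C"
  shows "is_ideal (\<Union>C)"
  unfolding is_ideal_def R.subspace_def
proof (intro conjI allI ballI)
  show "0 \<in> \<Union>C" using assms(1,2) ideal_0 by blast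
  fix x y assume "x \<in> \<Union>C" "y \<in> \<Union>C"
  then obtain X Y where "X \<in> C" "Y \<in> C" "x \<in> X" "y \<in> Y" by auto
  moreover have "X \<subseteq> Y \<or> Y \<subseteq> X" using assms(3) \<open>X \<in> C\<close> \<open>Y \<in> C\<close> by (auto simp: subset_chain_def)
  ultimately show "x + y \<in> \<Union>C" using assms(2) ideal_add by blast
next
  fix c x assume "x \<in> \<Union>C"
  thus "c * x \<in> \<Union>C" using assms(2) ideal_mult_left by blast
qed

lemma ex_maximal_ideal_avoiding:
  assumes "is_ideal J" "a \<notin> J"
  shows "\<exists>Q. is_ideal Q \<and> J \<subseteq> Q \<and> a \<notin> Q \<and> (\<forall>X. is_ideal X \<and> Q \<subseteq> X \<and> a \<notin> X \<longrightarrow> X = Q)"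
proof -
  let ?S = "{Q. is_ideal Q \<and> J \<subseteq> Q \<and> a \<notin> Q}"
  have "\<exists>Q\<in>?S. \<forall>X\<in>?S. Q \<subseteq> X \<longrightarrow> X = Q"
  proof (rule subset_Zorn_nonempty)
    show "?S \<noteq> {}" using assms by blast
    fix C assume C: "C \<noteq> {}" "subset.chain ?S C"
    hence "C \<subseteq> ?S" "subset.chain UNIV C" unfolding subset_chain_def by blast+
    hence "is_ideal (\<Union>C)" using is_ideal_Union_chain[OF C(1)] by blast
    thus "\<Union>C \<in> ?S" using C(1) \<open>C \<subseteq> ?S\<close> by blast
  qed
  then obtain Q where Q: "Q \<in> ?S" and max: "\<forall>X\<in>?S. Q \<subseteq> X \<longrightarrow> X = Q" ..
  show ?thesis
  proof (intro exI conjI allI impI)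
    show "is_ideal Q" "J \<subseteq> Q" "a \<notin> Q" using Q by auto
    fix X assume "is_ideal X \<and> Q \<subseteq> X \<and> a \<notin> X"
    thus "X = Q" using max Q by blast
  qed
qed

lemma noetherian_ascending_chain:
  assumes "noetherian_ring TYPE('a::comm_ring_1)"
    and C: "\<And>i. is_ideal (C i :: 'a set)" and mono: "\<And>i. C i \<subseteq> C (Suc i)"
  shows "\<exists>i. C (Suc i) \<subseteq> C i"
proof -
  have chain: "C i \<subseteq> C j" if "i \<le> j" for i j using lift_Suc_mono_le[of C, OF mono that] .
  have union: "is_ideal (\<Union>(range C))"
  proof (rule is_ideal_Union_chain)
    show "subset.chain UNIV (range C)"
      unfolding subset_chain_def
    proof (intro conjI ballI)
      fix X Y assume "X \<in> range C" "Y \<in> range C"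
      then obtain i j where "X = C i" "Y = C j" by blast
      thus "X \<subseteq> Y \<or> Y \<subseteq> X" using chain[of i j] chain[of j i] by (cases "i \<le> j") auto
    qed simp
  qed (use C in auto)
  have "is_ideal (\<Union>(range C)) \<longrightarrow> (\<exists>F. finite F \<and> \<Union>(range C) = R.span F)"
    using assms(1) unfolding noetherian_ring_def by (rule spec)
  then obtain F where F: "finite F" "\<Union>(range C) = R.span F"
    using union by blast
  have "\<exists>n. G \<subseteq> C n" if "finite G" "G \<subseteq> \<Union>(range C)" for G
    using that
  proof (induction G rule: finite_induct)
    case (insert x G)
    obtain n where "G \<subseteq> C n" using insert by blast
    moreover obtain i where "x \<in> C i" using insert.prems by blast
    ultimately have "insert x G \<subseteq> C (max n i)" using chain[of n "max n i"] chain[of i "max n i"] by auto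
    thus ?case by blast
  qed simp
  moreover have "F \<subseteq> \<Union>(range C)" using F(2) R.span_superset[of F] by simp
  ultimately obtain n where "F \<subseteq> C n" using F(1) by blast
  hence "R.span F \<subseteq> C n" using C[of n] unfolding is_ideal_def by (intro R.span_minimal)
  thus ?thesis using F(2) by blast
qed

lemma maximal_avoiding_ideal_generates:
  assumes Q: "is_ideal Q" and max: "\<forall>X. is_ideal X \<and> Q \<subseteq> X \<and> a \<notin> X \<longrightarrow> X = Q"
    and "z \<notin> Q"
  shows "\<exists>k. a - k * z \<in> Q"
proof -
  have "Q \<subseteq> R.span (insert z Q)" "z \<in> R.span (insert z Q)"
    using R.span_superset[of "insert z Q"] by auto
  hence "a \<in> R.span (insert z Q)" using max is_ideal_span assms(3) by blast
  thus ?thesis using R.span_insert[of z Q] span_ideal[OF Q] by auto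
qed

lemma maximal_ideal_is_ideal: "maximal_ideal m \<Longrightarrow> is_ideal m"
  unfolding maximal_ideal_def by blast

lemma local_ring_maximal_ideal_unique:
  assumes "local_ring TYPE('a::comm_ring_1)" "maximal_ideal (M::'a set)" "maximal_ideal m"
  shows "M = m"
proof -
  obtain m0 where "\<And>m'. maximal_ideal (m'::'a set) \<Longrightarrow> m' = m0"
    using assms(1) unfolding local_ring_def by blast
  from this[OF assms(2)] this[OF assms(3)] show ?thesis by simp
qed

lemma one_not_in_maximal_ideal:
  assumes "maximal_ideal m"
  shows "(1::'a::comm_ring_1) \<notin> m"
proof
  assume "1 \<in> m"
  moreover have "is_ideal m" "m \<noteq> UNIV" using assms unfolding maximal_ideal_def by auto
  ultimately show False using ideal_eq_UNIV_iff by blast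
qed

context
  fixes m :: "'a::comm_ring_1 set"
  assumes local: "local_ring TYPE('a)" and maximal: "maximal_ideal m"
begin

lemma local_ring_proper_ideal_le:
  assumes "is_ideal J" "1 \<notin> J"
  shows "J \<subseteq> m"
proof -
  obtain M where M: "is_ideal M" "J \<subseteq> M" "1 \<notin> M"
    and max: "\<forall>X. is_ideal X \<and> M \<subseteq> X \<and> 1 \<notin> X \<longrightarrow> X = M"
    using ex_maximal_ideal_avoiding[OF assms] by blast
  have "maximal_ideal M"
    unfolding maximal_ideal_def
  proof (intro conjI allI impI)
    show "is_ideal M" "M \<noteq> UNIV" using M by auto
    fix K assume "is_ideal K \<and> M \<subseteq> K"
    thus "K = M \<or> K = UNIV" using max ideal_eq_UNIV_iff by blast
  qed
  hence "M = m" using local_ring_maximal_ideal_unique[OF local _ maximal] by blast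
  thus ?thesis using M by auto
qed

lemma local_ring_unit_if_not_in:
  assumes "a \<notin> m"
  shows "\<exists>b. a * b = 1"
proof (rule ccontr)
  assume "\<nexists>b. a * b = 1"
  hence "1 \<notin> R.span {a}" unfolding R.span_singleton by (metis mult.commute rangeE)
  hence "R.span {a} \<subseteq> m" using local_ring_proper_ideal_le[OF is_ideal_span] by blast
  thus False using assms R.span_base[of a "{a}"] by auto
qed

lemma local_ring_one_minus_unit:
  assumes "x \<in> m"
  shows "\<exists>b. (1 - x) * b = 1"
proof (rule local_ring_unit_if_not_in)
  show "1 - x \<notin> m"
    using ideal_add[OF maximal_ideal_is_ideal[OF maximal] _ assms, of "1 - x"]
      one_not_in_maximal_ideal[OF maximal] by auto
qed

text \<open>Maximality gives \<open>a \<in> Q + A z\<close> for all \<open>z \<notin> Q\<close>. For \<open>z = a x\<close> this forces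
  \<open>a x \<in> Q\<close>, since \<open>1 - k x\<close> is a unit; for \<open>z = x\<^sup>i\<close>, with \<open>i\<close> where the chain of ideals
  \<open>(Q : x\<^sup>i)\<close> has stabilised, it forces \<open>a \<in> Q\<close>.\<close>

lemma maximal_avoiding_ideal_nilpotent:
  assumes "noetherian_ring TYPE('a)"
    and Q: "is_ideal Q" "a \<notin> Q" and max: "\<forall>X. is_ideal X \<and> Q \<subseteq> X \<and> a \<notin> X \<longrightarrow> X = Q"
    and x: "x \<in> m"
  shows "\<exists>e. x ^ e \<in> Q"
proof -
  note generates = maximal_avoiding_ideal_generates[OF Q(1) max]
  have ax: "a * x \<in> Q"
  proof (rule ccontr)
    assume "a * x \<notin> Q"
    then obtain k where k: "a - k * (a * x) \<in> Q" using generates by blast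
    have "k * x \<in> m" using ideal_mult_left[OF maximal_ideal_is_ideal[OF maximal] x] .
    then obtain b where b: "(1 - k * x) * b = 1" using local_ring_one_minus_unit by blast
    have "(a - k * (a * x)) * b \<in> Q" using k ideal_mult_right[OF Q(1)] by blast
    also have "(a - k * (a * x)) * b = a * ((1 - k * x) * b)" by (simp add: algebra_simps)
    finally show False using b Q(2) by simp
  qed
  let ?C = "\<lambda>i. {y. x ^ i * y \<in> Q}"
  have "?C i \<subseteq> ?C (Suc i)" for i
  proof
    fix y assume "y \<in> ?C i"
    hence "x * (x ^ i * y) \<in> Q" using ideal_mult_left[OF Q(1)] by simp
    thus "y \<in> ?C (Suc i)" by (simp add: mult.assoc)
  qed
  then obtain i where i: "?C (Suc i) \<subseteq> ?C i"
    using noetherian_ascending_chain[OF assms(1) is_ideal_colon[OF Q(1)]] by blast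
  show ?thesis
  proof (rule ccontr)
    assume "\<nexists>e. x ^ e \<in> Q"
    hence "x ^ i \<notin> Q" by simp
    then obtain k where k: "a - k * x ^ i \<in> Q" using generates by blast
    have "a * x - (a - k * x ^ i) * x \<in> Q"
      using ideal_diff[OF Q(1) ax ideal_mult_right[OF Q(1) k]] .
    also have "a * x - (a - k * x ^ i) * x = x ^ Suc i * k" by (simp add: algebra_simps)
    finally have "k \<in> ?C (Suc i)" by simp
    hence "x ^ i * k \<in> Q" using i by blast
    hence "(a - k * x ^ i) + x ^ i * k \<in> Q" using ideal_add[OF Q(1) k] by blast
    thus False using Q(2) by (simp add: mult.commute)
  qed
qed

end

section \<open>Ideals of finite colength\<close>

locale k_algebra =
  fixes \<phi> :: "'k::field \<Rightarrow> 'a::comm_ring_1"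
  assumes ring_hom: "ring_hom \<phi>"
begin

lemma hom_add: "\<phi> (x + y) = \<phi> x + \<phi> y"
  using ring_hom unfolding ring_hom_def by simp

lemma hom_mult: "\<phi> (x * y) = \<phi> x * \<phi> y"
  using ring_hom unfolding ring_hom_def by simp

lemma hom_1: "\<phi> 1 = 1"
  using ring_hom unfolding ring_hom_def by simp

lemma hom_0: "\<phi> 0 = 0"
  using hom_add[of 0 0] by simp

sublocale K: module "\<lambda>c a. \<phi> c * a"
  by unfold_locales (simp_all add: hom_add hom_mult hom_1 algebra_simps)

lemma K_subspace_if_ideal: "is_ideal I \<Longrightarrow> K.subspace I"
  unfolding is_ideal_def R.subspace_def K.subspace_def by blast

lemma K_span_ideal: "is_ideal I \<Longrightarrow> K.span I = I"
  using K_subspace_if_ideal by simp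

lemma K_span_mult_left: "y \<in> K.span X \<Longrightarrow> z * y \<in> K.span ((*) z ` X)"
proof (induction rule: K.span_induct_alt)
  case (step c x y)
  have "z * x \<in> K.span ((*) z ` X)" using step(1) by (intro K.span_base) blast
  hence "\<phi> c * (z * x) + z * y \<in> K.span ((*) z ` X)" using step(2) K.span_add K.span_scale by blast
  thus ?case by (simp add: algebra_simps)
qed (simp add: K.span_zero)

lemma K_span_one_maximal:
  assumes "\<forall>a. \<exists>c. a - \<phi> c \<in> m"
  shows "K.span ({1} \<union> m) = UNIV"
proof -
  have "a \<in> K.span ({1} \<union> m)" for a
  proof -
    obtain c where "a - \<phi> c \<in> m" using assms by blast
    hence "\<phi> c * 1 + (a - \<phi> c) \<in> K.span ({1} \<union> m)"
      by (intro K.span_add K.span_scale K.span_base) auto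
    thus ?thesis by simp
  qed
  thus ?thesis by blast
qed

lemma indep_mod_one_maximal:
  assumes "maximal_ideal m"
  shows "indep_mod (\<lambda>c a. \<phi> c * a) m {1}"
  unfolding indep_mod_def
proof (intro allI impI ballI)
  fix F u b assume F: "finite F \<and> F \<subseteq> {1} \<and> (\<Sum>b\<in>F. \<phi> (u b) * b) \<in> K.span m" and "b \<in> F"
  hence "F = {1}" "b = 1" by auto
  hence "\<phi> (u 1) \<in> m" using F K_span_ideal[OF maximal_ideal_is_ideal[OF assms]] by simp
  hence "\<phi> (u 1) * \<phi> (inverse (u 1)) \<in> m"
    using ideal_mult_right[OF maximal_ideal_is_ideal[OF assms]] by blast
  hence "u 1 = 0" using one_not_in_maximal_ideal[OF assms] by (metis hom_1 hom_mult right_inverse)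
  thus "u b = 0" using \<open>b = 1\<close> by simp
qed

definition finite_codim :: "'a set \<Rightarrow> bool" where
  "finite_codim J \<longleftrightarrow> (\<exists>P. finite P \<and> K.span (P \<union> J) = UNIV)"

text \<open>Multiplication by \<open>y\<close> maps \<open>A/(J + A x)\<close> onto \<open>(J + A y)/(J + A y x)\<close>.\<close>

lemma finite_codim_mult_insert:
  assumes J: "is_ideal J" and x: "finite_codim (R.span (insert x J))"
    and y: "finite_codim (R.span (insert y J))"
  shows "finite_codim (R.span (insert (y * x) J))"
proof -
  let ?K = "\<lambda>z. R.span (insert z J)"
  have mem_K: "v \<in> ?K z \<longleftrightarrow> (\<exists>k. v - k * z \<in> J)" for v z
    using R.span_insert[of z J] span_ideal[OF J] by simp
  have J_sub: "J \<subseteq> ?K z" for z using R.span_superset[of "insert z J"] by blast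
  obtain P where P: "finite P" "K.span (P \<union> ?K y) = UNIV"
    using y unfolding finite_codim_def by blast
  obtain P1 where P1: "finite P1" "K.span (P1 \<union> ?K x) = UNIV"
    using x unfolding finite_codim_def by blast
  let ?P = "P \<union> (*) y ` P1"
  let ?S = "K.span (?P \<union> ?K (y * x))"
  have shift: "y * v \<in> ?K (y * x)" if "v \<in> ?K x" for v
  proof -
    from that obtain k where k: "v - k * x \<in> J" unfolding mem_K ..
    have "y * v - k * (y * x) = y * (v - k * x)" by (simp add: algebra_simps)
    also have "\<dots> \<in> J" using ideal_mult_left[OF J k] .
    finally show ?thesis unfolding mem_K by (rule exI)
  qed
  have "(*) y ` (P1 \<union> ?K x) \<subseteq> ?P \<union> ?K (y * x)"
  proof (rule image_subsetI)
    fix v assume "v \<in> P1 \<union> ?K x"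
    thus "y * v \<in> ?P \<union> ?K (y * x)" using shift[of v] by blast
  qed
  hence "K.span ((*) y ` (P1 \<union> ?K x)) \<subseteq> ?S" by (rule K.span_mono)
  hence mult: "y * v \<in> ?S" for v
    using K_span_mult_left[of v "P1 \<union> ?K x" y] P1(2) by blast
  have "?K y \<subseteq> ?S"
  proof
    fix v assume "v \<in> ?K y"
    then obtain k where "v - k * y \<in> J" unfolding mem_K ..
    hence "v - k * y \<in> ?S" using J_sub by (intro K.span_base UnI2) blast
    hence "(v - k * y) + y * k \<in> ?S" using mult by (rule K.span_add)
    thus "v \<in> ?S" by (simp add: mult.commute)
  qed
  moreover have "P \<subseteq> ?S" using K.span_superset[of "?P \<union> ?K (y * x)"] by (meson Un_upper1 order_trans)
  ultimately have "K.span (P \<union> ?K y) \<subseteq> ?S" by (intro K.span_minimal K.subspace_span Un_least)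
  hence "?S = UNIV" using P(2) by auto
  moreover have "finite ?P" using P(1) P1(1) by simp
  ultimately show ?thesis unfolding finite_codim_def by blast
qed

lemma finite_codim_power_insert:
  assumes "is_ideal J" "finite_codim (R.span (insert x J))"
  shows "finite_codim (R.span (insert (x ^ i) J))"
proof (induction i)
  case 0
  have "1 \<in> R.span (insert (x ^ 0) J)" by (rule R.span_base) simp
  hence "R.span (insert (x ^ 0) J) = UNIV" using ideal_eq_UNIV_iff[OF is_ideal_span] by blast
  hence "K.span ({} \<union> R.span (insert (x ^ 0) J)) = UNIV" by simp
  thus ?case unfolding finite_codim_def by (meson finite.emptyI)
next
  case (Suc i)
  thus ?case using finite_codim_mult_insert[OF assms, of "x ^ i"] by (simp add: mult.commute)
qed

lemma finite_codim_if_power_mem: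
  assumes "is_ideal J" "finite_codim (R.span (insert x J))" "x ^ e \<in> J"
  shows "finite_codim J"
  using finite_codim_power_insert[OF assms(1,2), of e] assms(3) span_ideal[OF assms(1)]
  by (simp add: insert_absorb)

lemma finite_codim_if_nilpotent_generators:
  assumes Q: "is_ideal Q" and "finite H" "\<forall>h\<in>H. \<exists>e. h ^ e \<in> Q"
    and "finite_codim (R.span (Q \<union> H))"
  shows "finite_codim Q"
  using assms(2-)
proof (induction H rule: finite_induct)
  case empty
  thus ?case using span_ideal[OF Q] by simp
next
  case (insert h H)
  let ?J = "R.span (Q \<union> H)"
  have "R.span (Q \<union> insert h H) = R.span (insert h ?J)"
    unfolding R.span_eq using R.span_superset R.span_mono[of "Q \<union> H" "Q \<union> insert h H"]
    by (auto intro: R.span_base)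
  moreover obtain e where "h ^ e \<in> Q" using insert.prems(1) by auto
  hence "h ^ e \<in> ?J" using R.span_superset by blast
  ultimately have "finite_codim ?J"
    using finite_codim_if_power_mem[OF is_ideal_span] insert.prems(2) by metis
  thus ?case using insert.IH insert.prems(1) by blast
qed

lemma artinian_quotient_if_finite_codim:
  assumes "finite_codim Q"
  shows "artinian_quotient Q"
  unfolding artinian_quotient_def
proof (intro allI impI)
  fix J :: "nat \<Rightarrow> 'a set"
  assume "\<forall>i. is_ideal (J i) \<and> Q \<subseteq> J i \<and> J (Suc i) \<subseteq> J i"
  moreover obtain P where "finite P" "K.span (P \<union> Q) = UNIV"
    using assms unfolding finite_codim_def by blast
  ultimately show "\<exists>N. \<forall>i\<ge>N. J i = J N"
    using subspace_chain_stabilises[OF K.module_axioms] K_subspace_if_ideal by blast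
qed

lemma colength_obtain_basis:
  assumes "colength \<phi> I n" "0 < n"
  obtains C where "finite C" "indep_mod (\<lambda>c a. \<phi> c * a) I C" "K.span (C \<union> I) = UNIV" "card C = n"
proof -
  obtain C where C: "indep_mod (\<lambda>c a. \<phi> c * a) I C" "K.span (C \<union> I) = UNIV" "quot_dim (\<lambda>c a. \<phi> c * a) I = card C"
    by (rule obtain_quot_dim_basis[OF K.module_axioms])
  have "card C = n" using C(3) assms(1) unfolding colength_def by simp
  thus ?thesis using that C assms(2) card_ge_0_finite by blast
qed

lemma obtain_residue_coeffs:
  assumes "finite C" "K.span (C \<union> I) = UNIV" "is_ideal I"
  obtains U where "\<And>x. a x - (\<Sum>c\<in>C. \<phi> (U x c) * c) \<in> I"
proof -
  have "\<exists>u. a x - (\<Sum>c\<in>C. \<phi> (u c) * c) \<in> I" for x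
  proof -
    obtain y z where yz: "a x = y + z" "y \<in> K.span C" "z \<in> K.span I"
      using assms(2) K.span_Un[of C I] by blast
    obtain u where "y = (\<Sum>c\<in>C. \<phi> (u c) * c)"
      using yz(2) K.span_finite[OF assms(1)] by blast
    hence "a x - (\<Sum>c\<in>C. \<phi> (u c) * c) = z" using yz(1) by simp
    thus ?thesis using yz(3) K_span_ideal[OF assms(3)] by auto
  qed
  hence "\<exists>U. \<forall>x. a x - (\<Sum>c\<in>C. \<phi> (U x c) * c) \<in> I" by (rule choice[OF allI])
  thus ?thesis using that by blast
qed

text \<open>Ideals of finite colength separate the points of \<open>A\<close>: an ideal maximal among those
  avoiding \<open>a \<noteq> 0\<close> is \<open>m\<close>-primary, and \<open>m\<close> is finitely generated with \<open>A/m = k\<close>.\<close>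

lemma ex_colength_ideal_not_mem:
  assumes local: "local_ring TYPE('a)" and noeth: "noetherian_ring TYPE('a)"
    and m: "maximal_ideal m" and residue: "\<forall>a. \<exists>c. a - \<phi> c \<in> m"
    and "a \<noteq> 0"
  shows "\<exists>I n. 0 < n \<and> colength \<phi> I n \<and> a \<notin> I"
proof -
  have "is_ideal {0}" unfolding is_ideal_def by simp
  then obtain Q where Q: "is_ideal Q" "a \<notin> Q"
    and max: "\<forall>X. is_ideal X \<and> Q \<subseteq> X \<and> a \<notin> X \<longrightarrow> X = Q"
    using ex_maximal_ideal_avoiding[of "{0}" a] \<open>a \<noteq> 0\<close> by blast
  have "1 \<notin> Q" using Q ideal_mult_left[of Q 1 a] by force
  hence "Q \<subseteq> m" using local_ring_proper_ideal_le[OF local m Q(1)] by blast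
  have "is_ideal m \<longrightarrow> (\<exists>G. finite G \<and> m = R.span G)"
    using noeth unfolding noetherian_ring_def by (rule spec)
  then obtain G where G: "finite G" "m = R.span G" using maximal_ideal_is_ideal[OF m] by blast
  have "G \<subseteq> m" using G(2) R.span_superset by blast
  have "R.span (Q \<union> G) = m"
  proof
    show "R.span (Q \<union> G) \<subseteq> m"
      using \<open>Q \<subseteq> m\<close> \<open>G \<subseteq> m\<close> maximal_ideal_is_ideal[OF m] unfolding is_ideal_def
      by (intro R.span_minimal) auto
    show "m \<subseteq> R.span (Q \<union> G)" using G(2) R.span_mono[of G "Q \<union> G"] by blast
  qed
  moreover have "finite_codim m"
    using K_span_one_maximal[OF residue] unfolding finite_codim_def by blast
  moreover have "\<forall>h\<in>G. \<exists>e. h ^ e \<in> Q"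
    using maximal_avoiding_ideal_nilpotent[OF local m noeth Q max] \<open>G \<subseteq> m\<close> by blast
  ultimately have "finite_codim Q"
    using finite_codim_if_nilpotent_generators[OF Q(1) G(1)] by simp
  then obtain P where "finite P" "K.span (P \<union> Q) = UNIV" unfolding finite_codim_def by blast
  moreover have "K.span Q \<noteq> UNIV" using K_span_ideal[OF Q(1)] Q(2) by blast
  ultimately have "0 < quot_dim (\<lambda>c a. \<phi> c * a) Q" by (rule quot_dim_pos[OF K.module_axioms])
  moreover have "colength \<phi> Q (quot_dim (\<lambda>c a. \<phi> c * a) Q)"
    unfolding colength_def using Q(1) artinian_quotient_if_finite_codim[OF \<open>finite_codim Q\<close>] by blast
  ultimately show ?thesis using Q(2) by blast
qed

end

section \<open>Finitely generated modules\<close>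

lemma (in module) finite_basis_if_free_fin_gen:
  assumes "free_module scale" "fin_gen_module scale"
  obtains B where "finite B" "independent B" "span B = UNIV"
proof -
  obtain B where B: "independent B" "span B = UNIV"
    using assms(1) unfolding free_module_def by blast
  obtain S where S: "finite S" "span S = UNIV"
    using assms(2) unfolding fin_gen_module_def by blast
  have ex_t: "\<exists>t. finite t \<and> t \<subseteq> B \<and> s \<in> span t" for s
  proof -
    have "s \<in> span B" using B(2) by simp
    then obtain t r where t: "finite t" "t \<subseteq> B" "s = (\<Sum>a\<in>t. scale (r a) a)"
      unfolding span_explicit by blast
    have "s \<in> span t" unfolding t(3) by (intro span_sum span_scale span_base)
    thus ?thesis using t(1,2) by blast
  qed
  have "\<exists>T. \<forall>s. finite (T s) \<and> T s \<subseteq> B \<and> s \<in> span (T s)"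
    by (rule choice, use ex_t in blast)
  then obtain T where T: "\<And>s. finite (T s) \<and> T s \<subseteq> B \<and> s \<in> span (T s)" by blast
  let ?T = "\<Union>(T ` S)"
  have "S \<subseteq> span ?T"
  proof
    fix s assume "s \<in> S"
    thus "s \<in> span ?T" using T[of s] span_mono[of "T s" ?T] by blast
  qed
  hence "B \<subseteq> span ?T" using S(2) span_minimal[OF _ subspace_span] by blast
  moreover have "?T \<subseteq> B" using T by blast
  ultimately have "?T = B" using spanning_subset_independent[OF _ B(1)] by blast
  moreover have "finite ?T" using T by (intro finite_UN_I S(1)) blast
  ultimately show ?thesis using that B by simp
qed

lemma (in module) subspace_add_ideal_scale:
  assumes "subspace W" "is_ideal I"
  shows "subspace {w + scale t x | w t. w \<in> W \<and> t \<in> I}" (is "subspace ?Z")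
proof -
  have Z_I: "w + scale t x \<in> ?Z" if "w \<in> W" "t \<in> I" for w t
    using that by blast
  show ?thesis
    unfolding subspace_def
  proof (intro conjI ballI allI)
    show "0 \<in> ?Z" using Z_I[OF subspace_0[OF assms(1)] ideal_0[OF assms(2)]] by simp
  next
    fix y z assume "y \<in> ?Z" "z \<in> ?Z"
    then obtain w1 t1 w2 t2 where "y = w1 + scale t1 x" "w1 \<in> W" "t1 \<in> I"
      "z = w2 + scale t2 x" "w2 \<in> W" "t2 \<in> I" by blast
    moreover from calculation have "w1 + w2 \<in> W" "t1 + t2 \<in> I"
      using subspace_add[OF assms(1)] ideal_add[OF assms(2)] by auto
    hence "(w1 + w2) + scale (t1 + t2) x \<in> ?Z" by (rule Z_I)
    ultimately show "y + z \<in> ?Z" by (simp add: scale_left_distrib ac_simps)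
  next
    fix c z assume "z \<in> ?Z"
    then obtain w t where wt: "z = w + scale t x" "w \<in> W" "t \<in> I" by blast
    hence "scale c w \<in> W" "c * t \<in> I"
      using subspace_scale[OF assms(1)] ideal_mult_left[OF assms(2)] by auto
    hence "scale c w + scale (c * t) x \<in> ?Z" by (rule Z_I)
    thus "scale c z \<in> ?Z" using wt(1) by (simp add: scale_right_distrib)
  qed
qed

text \<open>The key step of Nakayama's lemma: the component of \<open>x\<close> in \<open>mM\<close> is \<open>w + t x\<close> with
  \<open>t \<in> m\<close>, so \<open>(1 - t) x\<close>, and with it \<open>x\<close>, lies in the span of the remaining generators.\<close>

lemma (in module) nakayama_remove_generator:
  assumes local: "local_ring TYPE('a)" and m: "maximal_ideal m"
    and span_mod: "span (G \<union> ideal_times scale m) = UNIV"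
    and "span (G \<union> insert x X) = UNIV"
  shows "span (G \<union> X) = UNIV"
proof -
  have m_ideal: "is_ideal m" using maximal_ideal_is_ideal[OF m] .
  let ?W = "span (G \<union> X)"
  let ?Z = "{w + scale t x | w t. w \<in> ?W \<and> t \<in> m}"
  have "scale a y \<in> ?Z" if "a \<in> m" for a y
  proof -
    have "y \<in> span (insert x (G \<union> X))" using assms(4) by simp
    then obtain k where k: "y - scale k x \<in> ?W" unfolding span_insert by blast
    have "scale a y = scale a (y - scale k x) + scale (a * k) x"
      by (simp add: scale_right_diff_distrib)
    thus ?thesis using span_scale[OF k] ideal_mult_right[OF m_ideal that] by blast
  qed
  hence IM_Z: "ideal_times scale m \<subseteq> ?Z"
    unfolding ideal_times_def
    by (intro span_minimal[OF _ subspace_add_ideal_scale[OF subspace_span m_ideal]]) blast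
  have "x \<in> span (G \<union> ideal_times scale m)" using span_mod by simp
  then obtain g z where gz: "x = g + z" "g \<in> span G" "z \<in> span (ideal_times scale m)"
    unfolding span_Un by blast
  have "span (ideal_times scale m) = ideal_times scale m"
    unfolding ideal_times_def by (rule span_span)
  with gz(3) IM_Z obtain w t where wt: "z = w + scale t x" "w \<in> ?W" "t \<in> m"
    by auto
  have "scale (1 - t) x = g + w" using gz(1) wt(1) by (simp add: scale_left_diff_distrib algebra_simps)
  moreover have "g \<in> ?W" using gz(2) span_mono[of G "G \<union> X"] by blast
  ultimately have "scale (1 - t) x \<in> ?W" using wt(2) span_add by simp
  moreover obtain b where "(1 - t) * b = 1" using local_ring_one_minus_unit[OF local m wt(3)] by blast
  ultimately have "x \<in> ?W" using span_scale[of "scale (1 - t) x" _ b] by (simp add: mult.commute)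
  hence "G \<union> insert x X \<subseteq> ?W" using span_superset[of "G \<union> X"] by blast
  thus ?thesis using assms(4) span_minimal[OF _ subspace_span] by blast
qed

lemma (in module) nakayama:
  assumes "local_ring TYPE('a)" "maximal_ideal m" "fin_gen_module scale"
    and "span (G \<union> ideal_times scale m) = UNIV"
  shows "span G = UNIV"
proof -
  have "span (G \<union> X) = UNIV \<Longrightarrow> span G = UNIV" if "finite X" for X
    using that
  proof (induction X rule: finite_induct)
    case (insert x X)
    thus ?case using nakayama_remove_generator[OF assms(1,2,4)] by blast
  qed simp
  moreover obtain S where "finite S" "span S = UNIV"
    using assms(3) unfolding fin_gen_module_def by blast
  moreover from this have "span (G \<union> S) = UNIV" using span_mono[of S "G \<union> S"] by blast
  ultimately show ?thesis by blast
qed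

section \<open>Reduction of a module modulo ideals\<close>

locale k_algebra_module = k_algebra \<phi> for \<phi> :: "'k::field \<Rightarrow> 'a::comm_ring_1" +
  fixes scale :: "'a \<Rightarrow> 'm::ab_group_add \<Rightarrow> 'm"
  assumes module: "module scale"
begin

sublocale M: module scale by (rule module)

sublocale KM: module "\<lambda>c x. scale (\<phi> c) x"
  by unfold_locales
    (simp_all add: M.scale_right_distrib M.scale_left_distrib hom_add hom_mult hom_1)

lemma ideal_times_subspace: "M.subspace (ideal_times scale I)"
  unfolding ideal_times_def by (rule M.subspace_span)

lemma scale_mem_ideal_times: "i \<in> I \<Longrightarrow> scale i y \<in> ideal_times scale I"
  unfolding ideal_times_def by (rule M.span_base) blast

lemma sum_mem_ideal_times:
  "(\<And>g. g \<in> G \<Longrightarrow> f g \<in> I) \<Longrightarrow> (\<Sum>g\<in>G. scale (f g) g) \<in> ideal_times scale I"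
  by (rule M.subspace_sum[OF ideal_times_subspace], rule scale_mem_ideal_times) simp

lemma KM_subspace_if_M_subspace: "M.subspace N \<Longrightarrow> KM.subspace N"
  unfolding M.subspace_def KM.subspace_def by blast

lemma KM_span_ideal_times: "KM.span (ideal_times scale I) = ideal_times scale I"
  using KM_subspace_if_M_subspace[OF ideal_times_subspace] by simp

lemma KM_span_le_M_span: "KM.span X \<subseteq> M.span X"
  by (intro KM.span_minimal M.span_superset KM_subspace_if_M_subspace M.subspace_span)

lemma sum_product_scale:
  assumes "finite C" "finite G"
  shows "(\<Sum>p\<in>C \<times> G. scale (\<phi> (u p)) (scale (fst p) (snd p))) =
         (\<Sum>g\<in>G. scale (\<Sum>c\<in>C. \<phi> (u (c, g)) * c) g)"
proof -
  have "(\<Sum>p\<in>C \<times> G. scale (\<phi> (u p)) (scale (fst p) (snd p))) =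
        (\<Sum>c\<in>C. \<Sum>g\<in>G. scale (\<phi> (u (c, g))) (scale c g))"
    by (simp add: sum.cartesian_product case_prod_beta)
  also have "\<dots> = (\<Sum>g\<in>G. \<Sum>c\<in>C. scale (\<phi> (u (c, g)) * c) g)"
    by (subst sum.swap) simp
  also have "\<dots> = (\<Sum>g\<in>G. scale (\<Sum>c\<in>C. \<phi> (u (c, g)) * c) g)"
    by (simp add: M.scale_sum_left)
  finally show ?thesis .
qed

lemma KM_span_products:
  assumes C: "finite C" "K.span (C \<union> I) = UNIV" and I: "is_ideal I"
    and G: "finite G" "M.span G = UNIV"
  shows "KM.span ((\<lambda>p. scale (fst p) (snd p)) ` (C \<times> G) \<union> ideal_times scale I) = UNIV"
proof -
  let ?f = "\<lambda>p. scale (fst p) (snd p)"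
  let ?S = "KM.span (?f ` (C \<times> G) \<union> ideal_times scale I)"
  have "x \<in> ?S" for x
  proof -
    have "x \<in> M.span G" using G(2) by simp
    then obtain a where a: "x = (\<Sum>g\<in>G. scale (a g) g)"
      unfolding M.span_finite[OF G(1)] by blast
    obtain U where U: "\<And>g. a g - (\<Sum>c\<in>C. \<phi> (U g c) * c) \<in> I"
      using obtain_residue_coeffs[OF C I, of a] by blast
    let ?r = "\<lambda>g. \<Sum>c\<in>C. \<phi> (U g c) * c"
    have "x = (\<Sum>g\<in>G. scale (?r g) g) + (\<Sum>g\<in>G. scale (a g - ?r g) g)"
      unfolding a sum.distrib[symmetric] by (simp add: M.scale_left_distrib[symmetric])
    moreover have "(\<Sum>p\<in>C \<times> G. scale (\<phi> (U (snd p) (fst p))) (?f p)) \<in> ?S"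
      by (intro KM.span_sum KM.span_scale KM.span_base) auto
    hence "(\<Sum>g\<in>G. scale (?r g) g) \<in> ?S"
      using sum_product_scale[OF C(1) G(1), of "\<lambda>p. U (snd p) (fst p)"] by simp
    moreover have "(\<Sum>g\<in>G. scale (a g - ?r g) g) \<in> ?S"
      using sum_mem_ideal_times[of G "\<lambda>g. a g - ?r g", OF U] KM.span_superset by blast
    ultimately show ?thesis by (simp add: KM.span_add)
  qed
  thus ?thesis by blast
qed

lemma coeffs_mem_ideal_if_basis:
  assumes B: "finite B" "\<not> M.dependent B" "M.span B = UNIV" and I: "is_ideal I"
    and "(\<Sum>b\<in>B. scale (a b) b) \<in> ideal_times scale I"
  shows "\<forall>b\<in>B. a b \<in> I"
proof -
  let ?Z = "{(\<Sum>b\<in>B. scale (w b) b) | w. \<forall>b\<in>B. w b \<in> I}"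
  have Z_I: "(\<Sum>b\<in>B. scale (w b) b) \<in> ?Z" if "\<And>b. b \<in> B \<Longrightarrow> w b \<in> I" for w
    using that by blast
  have "M.subspace ?Z"
    unfolding M.subspace_def
  proof (intro conjI ballI allI)
    show "0 \<in> ?Z" using Z_I[of "\<lambda>_. 0"] ideal_0[OF I] by simp
  next
    fix x y assume "x \<in> ?Z" "y \<in> ?Z"
    then obtain v w where "x = (\<Sum>b\<in>B. scale (v b) b)" "\<forall>b\<in>B. v b \<in> I"
      "y = (\<Sum>b\<in>B. scale (w b) b)" "\<forall>b\<in>B. w b \<in> I" by blast
    thus "x + y \<in> ?Z"
      using Z_I[of "\<lambda>b. v b + w b"] ideal_add[OF I]
      by (simp add: sum.distrib[symmetric] M.scale_left_distrib)
  next
    fix c x assume "x \<in> ?Z"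
    then obtain w where "x = (\<Sum>b\<in>B. scale (w b) b)" "\<forall>b\<in>B. w b \<in> I" by blast
    thus "scale c x \<in> ?Z"
      using Z_I[of "\<lambda>b. c * w b"] ideal_mult_left[OF I] by (simp add: M.scale_sum_right)
  qed
  moreover have "scale i y \<in> ?Z" if "i \<in> I" for i y
  proof -
    have "y \<in> M.span B" using B(3) by simp
    then obtain v where "y = (\<Sum>b\<in>B. scale (v b) b)"
      unfolding M.span_finite[OF B(1)] by blast
    thus ?thesis
      using Z_I[of "\<lambda>b. i * v b"] ideal_mult_right[OF I that] by (simp add: M.scale_sum_right)
  qed
  ultimately have "ideal_times scale I \<subseteq> ?Z"
    unfolding ideal_times_def by (intro M.span_minimal) blast+
  then obtain w where w: "(\<Sum>b\<in>B. scale (a b) b) = (\<Sum>b\<in>B. scale (w b) b)" "\<forall>b\<in>B. w b \<in> I"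
    using assms(5) by blast
  have "(\<Sum>b\<in>B. scale (a b - w b) b) = 0"
    using w(1) by (simp add: M.scale_left_diff_distrib sum_subtractf)
  hence "\<forall>b\<in>B. a b - w b = 0"
    using M.independentD[OF B(2) B(1) subset_refl, of "\<lambda>b. a b - w b"] by blast
  thus ?thesis using w(2) by simp
qed

end

context k_algebra_module
begin

lemma tensor_quot_dim_free:
  assumes B: "finite B" "\<not> M.dependent B" "M.span B = UNIV" and I: "is_ideal I"
    and C: "finite C" "indep_mod (\<lambda>c a. \<phi> c * a) I C" "K.span (C \<union> I) = UNIV"
  shows "tensor_quot_dim \<phi> scale I = card C * card B"
proof -
  let ?f = "\<lambda>p. scale (fst p) (snd p)"
  have "quot_dim (\<lambda>c x. scale (\<phi> c) x) (ideal_times scale I) = card (C \<times> B)"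
  proof (rule quot_dim_family_eq_card[OF KM.module_axioms _ KM_span_products[OF C(1,3) I B(1,3)]])
    show "finite (C \<times> B)" using C(1) B(1) by simp
    fix u assume "(\<Sum>p\<in>C \<times> B. scale (\<phi> (u p)) (?f p)) \<in> KM.span (ideal_times scale I)"
    hence "(\<Sum>b\<in>B. scale (\<Sum>c\<in>C. \<phi> (u (c, b)) * c) b) \<in> ideal_times scale I"
      using KM_span_ideal_times sum_product_scale[OF C(1) B(1)] by simp
    hence coeffs: "\<forall>b\<in>B. (\<Sum>c\<in>C. \<phi> (u (c, b)) * c) \<in> I"
      by (rule coeffs_mem_ideal_if_basis[OF B I])
    show "\<forall>p\<in>C \<times> B. u p = 0"
    proof clarify
      fix c b assume "c \<in> C" "b \<in> B"
      hence "(\<Sum>c\<in>C. \<phi> (u (c, b)) * c) \<in> K.span I"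
        using coeffs by (simp only: K_span_ideal[OF I])
      thus "u (c, b) = 0"
        using indep_modD[OF C(2) C(1) subset_refl, of "\<lambda>c. u (c, b)"] \<open>c \<in> C\<close> by simp
    qed
  qed
  thus ?thesis unfolding tensor_quot_dim_def by (simp add: card_cartesian_product)
qed

lemma free_imp_tensor_quot_dim_ratio:
  assumes m: "maximal_ideal m" and residue: "\<forall>a. \<exists>c. a - \<phi> c \<in> m"
    and "free_module scale" "fin_gen_module scale" and I: "colength \<phi> I n" "0 < n"
  shows "real (tensor_quot_dim \<phi> scale I) / real n = real (tensor_quot_dim \<phi> scale m)"
proof -
  obtain B where B: "finite B" "\<not> M.dependent B" "M.span B = UNIV"
    using M.finite_basis_if_free_fin_gen[OF assms(3,4)] by blast
  obtain C where C: "finite C" "indep_mod (\<lambda>c a. \<phi> c * a) I C" "K.span (C \<union> I) = UNIV" "card C = n"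
    by (rule colength_obtain_basis[OF I])
  have "is_ideal I" using I(1) unfolding colength_def by blast
  have "tensor_quot_dim \<phi> scale I = n * card B"
    using tensor_quot_dim_free[OF B \<open>is_ideal I\<close> C(1-3)] C(4) by simp
  moreover have "tensor_quot_dim \<phi> scale m = card B"
    using tensor_quot_dim_free[OF B maximal_ideal_is_ideal[OF m] _ indep_mod_one_maximal[OF m]
        K_span_one_maximal[OF residue]] by simp
  ultimately show ?thesis using I(2) by simp
qed

text \<open>If \<open>G\<close> generates \<open>M\<close> and \<open>dim\<^sub>k M/IM = n |G|\<close>, then the \<open>n |G|\<close> products of \<open>G\<close>
  with a \<open>k\<close>-basis of \<open>A/I\<close> are independent modulo \<open>IM\<close>; reducing the coefficients of a
  relation among \<open>G\<close> modulo \<open>I\<close> then shows that they lie in \<open>I\<close>.\<close>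

lemma relation_coeffs_mem_colength_ideal:
  assumes G: "finite G" "M.span G = UNIV" and rel: "(\<Sum>g\<in>G. scale (a g) g) = 0"
    and I: "colength \<phi> I n" "0 < n" and dim: "tensor_quot_dim \<phi> scale I = n * card G"
  shows "\<forall>g\<in>G. a g \<in> I"
proof -
  obtain C where C: "finite C" "indep_mod (\<lambda>c a. \<phi> c * a) I C" "K.span (C \<union> I) = UNIV" "card C = n"
    by (rule colength_obtain_basis[OF I])
  have "is_ideal I" using I(1) unfolding colength_def by blast
  obtain U where U: "\<And>g. a g - (\<Sum>c\<in>C. \<phi> (U g c) * c) \<in> I"
    using obtain_residue_coeffs[OF C(1,3) \<open>is_ideal I\<close>, of a] by blast
  let ?r = "\<lambda>g. \<Sum>c\<in>C. \<phi> (U g c) * c"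
  let ?f = "\<lambda>p. scale (fst p) (snd p)"
  have "(\<Sum>p\<in>C \<times> G. scale (\<phi> (U (snd p) (fst p))) (?f p)) = (\<Sum>g\<in>G. scale (?r g) g)"
    using sum_product_scale[OF C(1) G(1), of "\<lambda>p. U (snd p) (fst p)"] by simp
  also have "\<dots> = (\<Sum>g\<in>G. scale (a g) g) - (\<Sum>g\<in>G. scale (a g - ?r g) g)"
    by (simp add: M.scale_left_diff_distrib sum_subtractf)
  also have "\<dots> = - (\<Sum>g\<in>G. scale (a g - ?r g) g)" using rel by simp
  also have "\<dots> \<in> ideal_times scale I"
    using M.subspace_neg[OF ideal_times_subspace sum_mem_ideal_times[OF U]] .
  finally have in_IM: "(\<Sum>p\<in>C \<times> G. scale (\<phi> (U (snd p) (fst p))) (?f p)) \<in> KM.span (ideal_times scale I)"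
    unfolding KM_span_ideal_times .
  have "quot_dim (\<lambda>c x. scale (\<phi> c) x) (ideal_times scale I) = card (C \<times> G)"
    using dim C(4) unfolding tensor_quot_dim_def by (simp add: card_cartesian_product)
  hence "U g c = 0" if "g \<in> G" "c \<in> C" for g c
    using quot_dim_family_indep[OF KM.module_axioms _ KM_span_products[OF C(1,3) \<open>is_ideal I\<close> G]
        _ in_IM, of "(c, g)"] C(1) G(1) that by simp
  hence "?r g = 0" if "g \<in> G" for g using that by (simp add: hom_0)
  thus ?thesis using U by (metis diff_zero)
qed

lemma free_if_tensor_quot_dim_ratio:
  assumes local: "local_ring TYPE('a)" and noeth: "noetherian_ring TYPE('a)"
    and m: "maximal_ideal m" and residue: "\<forall>a. \<exists>c. a - \<phi> c \<in> m"
    and fg: "fin_gen_module scale"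
    and ratio: "\<forall>n I. 0 < n \<and> colength \<phi> I n \<longrightarrow>
       real (tensor_quot_dim \<phi> scale I) / real n = real (tensor_quot_dim \<phi> scale m)"
  shows "free_module scale"
proof -
  obtain S where S: "finite S" "M.span S = UNIV" using fg unfolding fin_gen_module_def by blast
  obtain B where B: "indep_mod (\<lambda>c x. scale (\<phi> c) x) (ideal_times scale m) B"
    "KM.span (B \<union> ideal_times scale m) = UNIV"
    "quot_dim (\<lambda>c x. scale (\<phi> c) x) (ideal_times scale m) = card B"
    by (rule obtain_quot_dim_basis[OF KM.module_axioms])
  have "finite B"
    using indep_mod_card_le_quot_dim[OF KM.module_axioms _ KM_span_products[OF _
        K_span_one_maximal[OF residue] maximal_ideal_is_ideal[OF m] S] B(1)] S(1) by simp
  have "M.span B = UNIV"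
    using M.nakayama[OF local m fg] KM_span_le_M_span[of "B \<union> ideal_times scale m"] B(2) by blast
  have dim: "tensor_quot_dim \<phi> scale I = n * card B" if "0 < n" "colength \<phi> I n" for n I
  proof -
    have "real (tensor_quot_dim \<phi> scale I) = real (n * card B)"
      using ratio that B(3) unfolding tensor_quot_dim_def by (simp add: divide_eq_eq)
    thus ?thesis by (simp only: of_nat_eq_iff)
  qed
  have "a b = 0" if "(\<Sum>b\<in>B. scale (a b) b) = 0" "b \<in> B" for a b
  proof (rule ccontr)
    assume "a b \<noteq> 0"
    then obtain I n where "0 < n" "colength \<phi> I n" "a b \<notin> I"
      using ex_colength_ideal_not_mem[OF local noeth m residue] by blast
    thus False using relation_coeffs_mem_colength_ideal[OF \<open>finite B\<close> \<open>M.span B = UNIV\<close> that(1)]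
        dim that(2) by blast
  qed
  hence "\<not> M.dependent B" using M.dependent_finite[OF \<open>finite B\<close>] by blast
  thus ?thesis unfolding free_module_def using \<open>M.span B = UNIV\<close> by blast
qed

end

theorem proposition3:
  fixes \<phi> :: "'k::field \<Rightarrow> 'a::comm_ring_1"
    and scale :: "'a \<Rightarrow> 'm::ab_group_add \<Rightarrow> 'm"
    and m :: "'a set"
  assumes "alg_closed TYPE('k)"
    and "ring_hom \<phi>"
    and "local_ring TYPE('a)" and "noetherian_ring TYPE('a)"
    and "maximal_ideal m"
    and "\<forall>a. \<exists>c. a - \<phi> c \<in> m"
    and "module scale" and "fin_gen_module scale"
  shows "free_module scale \<longleftrightarrow>
    (\<forall>n::nat. \<forall>I. n > 0 \<and> colength \<phi> I n \<longrightarrow>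
       real (tensor_quot_dim \<phi> scale I) / real n = real (tensor_quot_dim \<phi> scale m))"
proof -
  interpret k_algebra_module \<phi> scale
    by (intro k_algebra_module.intro k_algebra.intro k_algebra_module_axioms.intro assms(2,7))
  show ?thesis
    using free_imp_tensor_quot_dim_ratio[OF assms(5,6) _ assms(8)]
      free_if_tensor_quot_dim_ratio[OF assms(3-6,8)] by blast
qed

end
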